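(* Consider a market with $n$ buyers, $m$ items and $T$ time periods. Item $j$ has per-period supply $s_j^t\ge 0$ for each $t=1,\dots,T$ and overall supply $s_j\ge 0$. Buyer $i$ has budget $B_i\ge 0$, valuations $v_{ij}\ge 0$, and demands $d_i^t\ge 0$ with total demand $d_i=\sum_t d_i^t$. An allocation is $x=(x_{ij}^t)\ge 0$, and buyer $i$'s utility is $u_i=\sum_j v_{ij}\big(\sum_t x_{ij}^t\big)-d_i$. Assume there is a feasible allocation (for the constraints below) with $u_i>0$ for all $i$. Let $x$ be an optimal solution of $$\max_{x\ge 0}\sum_i B_i\log\Big(\sum_j v_{ij}\sum_t x_{ij}^t-d_i\Big)\ \ \text{s.t.}\ \ \sum_i x_{ij}^t\le s_j^t\ \forall j,t;\qquad \sum_{t,i}x_{ij}^t\le s_j\ \forall j,$$ and let $\lambda_j^t\ge 0$ and $\lambda_j\ge 0$ be optimal dual variables of the per-period and overall supply constraints respectively (satisfying the KKT conditions with $x$). Define prices $p_j^t=\lambda_j^t+\lambda_j$. Then for every buyer $i$, $$\sum_{t,j}x_{ij}^t p_j^t=B_i\Big(1+\frac{d_i}{u_i}\Big).$$ *)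

theory Defs
  imports Complex_Main
begin

text \<open>Allocation x i j t = x_ij^t, per-period supply st j t = s_j^t, overall supply s j = s_j,
 budget B i, valuation v i j, per-period demand dt i t = d_i^t.\<close>

definition total_demand :: "nat \<Rightarrow> (nat \<Rightarrow> nat \<Rightarrow> real) \<Rightarrow> nat \<Rightarrow> real" where
  "total_demand T dt i = (\<Sum>t<T. dt i t)"

definition utility :: "nat \<Rightarrow> nat \<Rightarrow> (nat \<Rightarrow> nat \<Rightarrow> real) \<Rightarrow> (nat \<Rightarrow> nat \<Rightarrow> real)
    \<Rightarrow> (nat \<Rightarrow> nat \<Rightarrow> nat \<Rightarrow> real) \<Rightarrow> nat \<Rightarrow> real" where
  "utility m T v dt x i = (\<Sum>j<m. v i j * (\<Sum>t<T. x i j t)) - total_demand T dt i"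

definition feasible :: "nat \<Rightarrow> nat \<Rightarrow> nat \<Rightarrow> (nat \<Rightarrow> nat \<Rightarrow> real) \<Rightarrow> (nat \<Rightarrow> real)
    \<Rightarrow> (nat \<Rightarrow> nat \<Rightarrow> nat \<Rightarrow> real) \<Rightarrow> bool" where
  "feasible n m T st s x \<longleftrightarrow>
     (\<forall>i<n. \<forall>j<m. \<forall>t<T. x i j t \<ge> 0) \<and>
     (\<forall>j<m. \<forall>t<T. (\<Sum>i<n. x i j t) \<le> st j t) \<and>
     (\<forall>j<m. (\<Sum>t<T. \<Sum>i<n. x i j t) \<le> s j)"

definition objective :: "nat \<Rightarrow> nat \<Rightarrow> nat \<Rightarrow> (nat \<Rightarrow> real) \<Rightarrow> (nat \<Rightarrow> nat \<Rightarrow> real)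
    \<Rightarrow> (nat \<Rightarrow> nat \<Rightarrow> real) \<Rightarrow> (nat \<Rightarrow> nat \<Rightarrow> nat \<Rightarrow> real) \<Rightarrow> real" where
  "objective n m T B v dt x = (\<Sum>i<n. B i * ln (utility m T v dt x i))"

definition optimal :: "nat \<Rightarrow> nat \<Rightarrow> nat \<Rightarrow> (nat \<Rightarrow> real) \<Rightarrow> (nat \<Rightarrow> nat \<Rightarrow> real)
    \<Rightarrow> (nat \<Rightarrow> nat \<Rightarrow> real) \<Rightarrow> (nat \<Rightarrow> nat \<Rightarrow> real) \<Rightarrow> (nat \<Rightarrow> real)
    \<Rightarrow> (nat \<Rightarrow> nat \<Rightarrow> nat \<Rightarrow> real) \<Rightarrow> bool" where
  "optimal n m T B v dt st s x \<longleftrightarrow>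
     feasible n m T st s x \<and> (\<forall>i<n. utility m T v dt x i > 0) \<and>
     (\<forall>y. feasible n m T st s y \<and> (\<forall>i<n. utility m T v dt y i > 0) \<longrightarrow>
          objective n m T B v dt y \<le> objective n m T B v dt x)"

text \<open>KKT conditions for the problem with multipliers lt j t (= lambda_j^t) for the per-period
  supply constraints and l j (= lambda_j) for the overall supply constraints:
  dual feasibility, stationarity of the Lagrangian w.r.t. x \<ge> 0 (gradient of the objective
  in x_ij^t is B_i v_ij / u_i), and complementary slackness.\<close>
definition KKT :: "nat \<Rightarrow> nat \<Rightarrow> nat \<Rightarrow> (nat \<Rightarrow> real) \<Rightarrow> (nat \<Rightarrow> nat \<Rightarrow> real)
    \<Rightarrow> (nat \<Rightarrow> nat \<Rightarrow> real) \<Rightarrow> (nat \<Rightarrow> nat \<Rightarrow> real) \<Rightarrow> (nat \<Rightarrow> real)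
    \<Rightarrow> (nat \<Rightarrow> nat \<Rightarrow> nat \<Rightarrow> real) \<Rightarrow> (nat \<Rightarrow> nat \<Rightarrow> real) \<Rightarrow> (nat \<Rightarrow> real) \<Rightarrow> bool" where
  "KKT n m T B v dt st s x lt l \<longleftrightarrow>
     feasible n m T st s x \<and> (\<forall>i<n. utility m T v dt x i > 0) \<and>
     (\<forall>j<m. \<forall>t<T. lt j t \<ge> 0) \<and> (\<forall>j<m. l j \<ge> 0) \<and>
     (\<forall>i<n. \<forall>j<m. \<forall>t<T.
        B i * v i j / utility m T v dt x i - lt j t - l j \<le> 0 \<and>
        x i j t * (B i * v i j / utility m T v dt x i - lt j t - l j) = 0) \<and>
     (\<forall>j<m. \<forall>t<T. lt j t * (st j t - (\<Sum>i<n. x i j t)) = 0) \<and>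
     (\<forall>j<m. l j * (s j - (\<Sum>t<T. \<Sum>i<n. x i j t)) = 0)"

end

theory Submission
  imports Defs
begin

text \<open>Stationarity together with complementary slackness says that every good that buyer i
  buys in period t is priced at its marginal utility: p_j^t = B_i v_ij / u_i whenever
  x_ij^t > 0. Hence buyer i spends (B_i / u_i) sum_j v_ij sum_t x_ij^t = (B_i / u_i) (u_i + d_i).\<close>

lemma spending_eq_if_complementary_slackness:
  fixes x p :: "nat \<Rightarrow> nat \<Rightarrow> 'a :: comm_ring"
  assumes "\<And>j t. j < m \<Longrightarrow> t < T \<Longrightarrow> x j t * (c * v j - p j t) = 0"
  shows "(\<Sum>t<T. \<Sum>j<m. x j t * p j t) = c * (\<Sum>j<m. v j * (\<Sum>t<T. x j t))"
proof -
  have spend: "x j t * p j t = c * (v j * x j t)" if "j < m" "t < T" for j t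
    using assms[OF that] by (auto simp: algebra_simps)
  have "(\<Sum>t<T. \<Sum>j<m. x j t * p j t) = (\<Sum>t<T. \<Sum>j<m. c * (v j * x j t))"
    by (intro sum.cong refl) (simp add: spend)
  also have "\<dots> = c * (\<Sum>j<m. v j * (\<Sum>t<T. x j t))"
    by (simp add: sum.swap[of _ "{..<T}"] sum_distrib_left)
  finally show ?thesis .
qed

lemma KKT_utility_pos:
  assumes "KKT n m T B v dt st s x lt l" "i < n"
  shows "utility m T v dt x i > 0"
  using assms unfolding KKT_def by blast

lemma KKT_complementary_slackness:
  assumes "KKT n m T B v dt st s x lt l" "i < n" "j < m" "t < T"
  shows "x i j t * (B i / utility m T v dt x i * v i j - (lt j t + l j)) = 0"
proof -
  have "x i j t * (B i * v i j / utility m T v dt x i - lt j t - l j) = 0"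
    using assms unfolding KKT_def by blast
  then show ?thesis by (simp add: algebra_simps)
qed

theorem lemma2:
  fixes n m T :: nat
    and B :: "nat \<Rightarrow> real" and v :: "nat \<Rightarrow> nat \<Rightarrow> real" and dt :: "nat \<Rightarrow> nat \<Rightarrow> real"
    and st :: "nat \<Rightarrow> nat \<Rightarrow> real" and s :: "nat \<Rightarrow> real"
    and x :: "nat \<Rightarrow> nat \<Rightarrow> nat \<Rightarrow> real" and lt :: "nat \<Rightarrow> nat \<Rightarrow> real" and l :: "nat \<Rightarrow> real"
  assumes st_nn: "\<forall>j<m. \<forall>t<T. st j t \<ge> 0"
    and s_nn: "\<forall>j<m. s j \<ge> 0"
    and B_nn: "\<forall>i<n. B i \<ge> 0"
    and v_nn: "\<forall>i<n. \<forall>j<m. v i j \<ge> 0"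
    and dt_nn: "\<forall>i<n. \<forall>t<T. dt i t \<ge> 0"
    and slater: "\<exists>y. feasible n m T st s y \<and> (\<forall>i<n. utility m T v dt y i > 0)"
    and opt: "optimal n m T B v dt st s x"
    and kkt: "KKT n m T B v dt st s x lt l"
  shows "\<forall>i<n. (\<Sum>t<T. \<Sum>j<m. x i j t * (lt j t + l j))
           = B i * (1 + total_demand T dt i / utility m T v dt x i)"
proof (intro allI impI)
  fix i assume i: "i < n"
  define u where "u = utility m T v dt x i"
  have "u > 0"
    unfolding u_def using KKT_utility_pos[OF kkt i] .
  have "(\<Sum>t<T. \<Sum>j<m. x i j t * (lt j t + l j)) = B i / u * (\<Sum>j<m. v i j * (\<Sum>t<T. x i j t))"
    unfolding u_def
    by (rule spending_eq_if_complementary_slackness) (rule KKT_complementary_slackness[OF kkt i])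
  also have "\<dots> = B i / u * (u + total_demand T dt i)"
    unfolding u_def utility_def by simp
  also have "\<dots> = B i * (1 + total_demand T dt i / u)"
    using \<open>u > 0\<close> by (simp add: field_simps)
  finally show "(\<Sum>t<T. \<Sum>j<m. x i j t * (lt j t + l j))
      = B i * (1 + total_demand T dt i / utility m T v dt x i)"
    unfolding u_def .
qed

end
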